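(* Let $\alpha$ and $\beta$ be a Riemannian metric and a 1-form on a two-dimensional manifold with $\beta\ne0$, $b^2<1$ in the upper-sign case and $b^2<1/2$ in the lower-sign case, such that $$r_{ij}=2\tau\{(1\pm2b^2)a_{ij}\mp3b_ib_j\}+\frac{3}{\pm1-b^2}(b_is_j+b_js_i)$$ for a scalar function $\tau$. Define $\tilde\alpha=\sqrt{\xi\alpha^2+\eta\beta^2}$ and $\tilde\beta=\beta$, where $$\xi=\frac{(1\mp b^2)^3}{(1\pm2b^2)^{3/2}},\qquad \eta=\frac{9}{8b^2}\Big\{(1\pm2b^2)^{3/2}-\frac{1\mp2b^2+4b^4}{(1\pm2b^2)^{3/2}}\Big\}.$$ Then $\tilde r_{ij}=\dfrac{2\tau(1\mp b^2)^2}{(1\pm2b^2)^{5/2}}\,\tilde a_{ij}$, where $\tilde a_{ij}$ are the coefficients of $\tilde\alpha^2$ and $\tilde r_{ij}$ is the symmetrized covariant derivative of $\beta$ with respect to $\tilde\alpha$; moreover $\|\beta\|_{\tilde\alpha}^2=\dfrac{b^2}{(1\pm2b^2)^{3/2}}$.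
   Context: For $\alpha=\sqrt{a_{ij}y^iy^j}$ and $\beta=b_iy^i$: $b^i=a^{ij}b_j$, $b=\|\beta\|_\alpha=\sqrt{a^{ij}b_ib_j}$; $b_{i|j}$ is the covariant derivative of $\beta$ w.r.t. the Levi-Civita connection of $\alpha$, $r_{ij}=\frac12(b_{i|j}+b_{j|i})$, $s_{ij}=\frac12(b_{i|j}-b_{j|i})$, $s_j=b^is_{ij}$. Analogous quantities with tildes are taken with respect to $\tilde\alpha$. Upper signs refer to one case and lower signs to the other throughout. *)

theory Defs
  imports "HOL-Analysis.Analysis"
begin

text \<open>Local coordinate description on an open chart U of the plane.
  A metric alpha is given by its coefficient matrix field A (a_ij), a 1-form beta
  by its component field b (b_i).\<close>

definition pd :: "(real^2 \<Rightarrow> real) \<Rightarrow> 2 \<Rightarrow> real^2 \<Rightarrow> real" where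
  "pd f k x = deriv (\<lambda>t. f (x + t *\<^sub>R axis k 1)) 0"

definition riemannian_on :: "(real^2) set \<Rightarrow> (real^2 \<Rightarrow> real^2^2) \<Rightarrow> bool" where
  "riemannian_on U A \<longleftrightarrow>
     (\<forall>x\<in>U. transpose (A x) = A x \<and> (\<forall>v. v \<noteq> 0 \<longrightarrow> v \<bullet> (A x *v v) > 0)) \<and>
     (\<forall>x\<in>U. \<forall>i j. (\<lambda>y. A y $ i $ j) differentiable (at x))"

definition christoffel :: "(real^2 \<Rightarrow> real^2^2) \<Rightarrow> 2 \<Rightarrow> 2 \<Rightarrow> 2 \<Rightarrow> real^2 \<Rightarrow> real" where
  "christoffel A k i j x =
     (\<Sum>l\<in>UNIV. matrix_inv (A x) $ k $ l *
        (pd (\<lambda>y. A y $ l $ j) i x + pd (\<lambda>y. A y $ l $ i) j x - pd (\<lambda>y. A y $ i $ j) l x)) / 2"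

definition covd :: "(real^2 \<Rightarrow> real^2^2) \<Rightarrow> (real^2 \<Rightarrow> real^2) \<Rightarrow> 2 \<Rightarrow> 2 \<Rightarrow> real^2 \<Rightarrow> real" where
  "covd A b i j x = pd (\<lambda>y. b y $ i) j x - (\<Sum>k\<in>UNIV. christoffel A k i j x * b x $ k)"

definition r_tensor :: "(real^2 \<Rightarrow> real^2^2) \<Rightarrow> (real^2 \<Rightarrow> real^2) \<Rightarrow> 2 \<Rightarrow> 2 \<Rightarrow> real^2 \<Rightarrow> real" where
  "r_tensor A b i j x = (covd A b i j x + covd A b j i x) / 2"

definition s_tensor :: "(real^2 \<Rightarrow> real^2^2) \<Rightarrow> (real^2 \<Rightarrow> real^2) \<Rightarrow> 2 \<Rightarrow> 2 \<Rightarrow> real^2 \<Rightarrow> real" where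
  "s_tensor A b i j x = (covd A b i j x - covd A b j i x) / 2"

definition b_up :: "(real^2 \<Rightarrow> real^2^2) \<Rightarrow> (real^2 \<Rightarrow> real^2) \<Rightarrow> real^2 \<Rightarrow> real^2" where
  "b_up A b x = matrix_inv (A x) *v b x"

definition s_vec :: "(real^2 \<Rightarrow> real^2^2) \<Rightarrow> (real^2 \<Rightarrow> real^2) \<Rightarrow> 2 \<Rightarrow> real^2 \<Rightarrow> real" where
  "s_vec A b j x = (\<Sum>i\<in>UNIV. b_up A b x $ i * s_tensor A b i j x)"

definition bsq :: "(real^2 \<Rightarrow> real^2^2) \<Rightarrow> (real^2 \<Rightarrow> real^2) \<Rightarrow> real^2 \<Rightarrow> real" where
  "bsq A b x = b x \<bullet> (matrix_inv (A x) *v b x)"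

text \<open>eps = 1 : upper signs; eps = -1 : lower signs\<close>
definition xi_coef :: "real \<Rightarrow> real \<Rightarrow> real" where
  "xi_coef eps B = (1 - eps * B) ^ 3 / (1 + 2 * eps * B) powr (3/2)"

definition eta_coef :: "real \<Rightarrow> real \<Rightarrow> real" where
  "eta_coef eps B = 9 / (8 * B) *
     ((1 + 2 * eps * B) powr (3/2) - (1 - 2 * eps * B + 4 * B ^ 2) / (1 + 2 * eps * B) powr (3/2))"

definition tilde_metric :: "real \<Rightarrow> (real^2 \<Rightarrow> real^2^2) \<Rightarrow> (real^2 \<Rightarrow> real^2) \<Rightarrow> real^2 \<Rightarrow> real^2^2" where
  "tilde_metric eps A b y =
     xi_coef eps (bsq A b y) *\<^sub>R A y +
     eta_coef eps (bsq A b y) *\<^sub>R (\<chi> i j. b y $ i * b y $ j)"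

end

theory Submission
  imports Defs
begin

text \<open>
  Write \<open>a\<^sup>*\<^sub>i\<^sub>j = \<xi> a\<^sub>i\<^sub>j + \<eta> b\<^sub>i b\<^sub>j\<close> with \<open>\<xi>, \<eta>\<close> functions of \<open>b\<^sup>2\<close>.  By Sherman--Morrison the
  \<open>\<alpha>\<^sup>*\<close>-raised form of \<open>\<beta>\<close> is \<open>b\<^sup>i/\<lambda>\<close> with \<open>\<lambda> = \<xi> + \<eta> b\<^sup>2\<close>, so only the Christoffel symbols of
  \<open>\<alpha>\<^sup>*\<close> contracted with \<open>b\<^sup>i\<close> enter \<open>r\<^sup>*\<^sub>i\<^sub>j\<close>, and a direct computation gives
  \<open>2\<lambda> r\<^sup>*\<^sub>i\<^sub>j = 2\<xi> r\<^sub>i\<^sub>j - \<xi>'(\<dots>) - \<eta>'(\<dots>) - 2\<eta>(s\<^sub>i b\<^sub>j + s\<^sub>j b\<^sub>i)\<close>, where the derivatives of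
  \<open>b\<^sup>2\<close> are \<open>\<partial>\<^sub>k b\<^sup>2 = 2(b\<^sup>l r\<^sub>l\<^sub>k + s\<^sub>k)\<close>.  Substituting the hypothesis on \<open>r\<^sub>i\<^sub>j\<close>, the tensor
  \<open>\<lambda>(r\<^sup>*\<^sub>i\<^sub>j - \<tau>\<mu> a\<^sup>*\<^sub>i\<^sub>j)\<close> becomes a combination of \<open>a\<^sub>i\<^sub>j\<close>, \<open>b\<^sub>i b\<^sub>j\<close> and \<open>b\<^sub>i s\<^sub>j + b\<^sub>j s\<^sub>i\<close> whose
  three coefficients are ODE-type identities in \<open>b\<^sup>2\<close>; the given \<open>\<xi>, \<eta>\<close> satisfy them, with
  \<open>\<lambda> = (1 \<plusminus> 2b\<^sup>2)\<^sup>3\<^sup>/\<^sup>2\<close>.  The squared \<open>\<alpha>\<^sup>*\<close>-norm of \<open>\<beta>\<close> is \<open>b\<^sup>2/\<lambda>\<close>.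
\<close>

lemma matrix_inv_mult:
  fixes M :: "real^'n^'n"
  assumes "invertible M"
  shows "M ** matrix_inv M = mat 1" "matrix_inv M ** M = mat 1"
  using someI_ex[OF assms[unfolded invertible_def]] unfolding matrix_inv_def by auto

lemma posdef_invertible:
  fixes M :: "real^'n^'n"
  assumes "\<forall>v. v \<noteq> 0 \<longrightarrow> 0 < v \<bullet> (M *v v)"
  shows "invertible M"
  unfolding invertible_left_inverse matrix_left_invertible_ker
proof (intro allI impI)
  fix x assume "M *v x = 0"
  then show "x = 0" using assms by (metis inner_zero_right less_irrefl)
qed

lemma matrix_inv_vector_mult_cancel:
  fixes M :: "real^'n^'n"
  shows "invertible M \<Longrightarrow> M *v (matrix_inv M *v v) = v"
  by (simp add: matrix_vector_mul_assoc matrix_inv_mult)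

lemma symmetric_matrix_inv_left:
  fixes N :: "real^'n^'n"
  assumes "invertible N" "transpose N = N" "N *v w = v"
  shows "v v* matrix_inv N = w"
proof -
  have "v = w v* N" using assms(2,3) transpose_matrix_vector[of N w] by simp
  then show ?thesis by (simp add: vector_matrix_mul_assoc matrix_inv_mult(1)[OF assms(1)])
qed

lemma posdef_inverse_form_pos:
  fixes M :: "real^'n^'n"
  assumes "\<forall>v. v \<noteq> 0 \<longrightarrow> 0 < v \<bullet> (M *v v)" "v \<noteq> 0"
  shows "0 < v \<bullet> (matrix_inv M *v v)"
proof -
  define u where "u = matrix_inv M *v v"
  have Mu: "M *v u = v" unfolding u_def by (rule matrix_inv_vector_mult_cancel[OF posdef_invertible[OF assms(1)]])
  then have "u \<noteq> 0" using assms(2) by auto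
  then have "0 < u \<bullet> (M *v u)" using assms(1) by blast
  then show ?thesis unfolding Mu by (simp add: u_def inner_commute)
qed

text \<open>Sherman--Morrison for the rank-one update \<open>\<xi> M + \<eta> v v\<^sup>T\<close>, applied to \<open>v\<close> only.\<close>
lemma rank_one_update_inverse:
  fixes M :: "real^'n^'n" and v :: "real^'n"
  assumes sym: "transpose M = M" and pos: "\<forall>w. w \<noteq> 0 \<longrightarrow> 0 < w \<bullet> (M *v w)"
    and xi: "xi \<noteq> 0" and lam: "xi + eta * (v \<bullet> (matrix_inv M *v v)) \<noteq> 0"
  defines "N \<equiv> xi *\<^sub>R M + eta *\<^sub>R (\<chi> i j. v $ i * v $ j)"
  shows "invertible N" and "transpose N = N"
    and "v v* matrix_inv N = (1 / (xi + eta * (v \<bullet> (matrix_inv M *v v)))) *\<^sub>R (matrix_inv M *v v)"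
proof -
  define u where "u = matrix_inv M *v v"
  define l where "l = xi + eta * (v \<bullet> u)"
  have Mu: "M *v u = v" unfolding u_def by (rule matrix_inv_vector_mult_cancel[OF posdef_invertible[OF pos]])
  have Nw: "N *v w = xi *\<^sub>R (M *v w) + (eta * (v \<bullet> w)) *\<^sub>R v" for w
    unfolding N_def
    by (simp add: vec_eq_iff matrix_vector_mult_def inner_vec_def sum_distrib_left sum_distrib_right
        sum.distrib algebra_simps)
  have uM: "u \<bullet> (M *v w) = v \<bullet> w" for w
    using dot_lmul_matrix[of u M w] transpose_matrix_vector[of M u] sym Mu by simp
  show trN: "transpose N = N"
    using sym unfolding N_def by (simp add: vec_eq_iff transpose_def mult.commute)
  show invN: "invertible N"
    unfolding invertible_left_inverse matrix_left_invertible_ker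
  proof (intro allI impI)
    fix w assume "N *v w = 0"
    then have Mw: "xi *\<^sub>R (M *v w) + (eta * (v \<bullet> w)) *\<^sub>R v = 0" by (simp add: Nw)
    have "0 = u \<bullet> (xi *\<^sub>R (M *v w) + (eta * (v \<bullet> w)) *\<^sub>R v)" using Mw by simp
    also have "\<dots> = l * (v \<bullet> w)" by (simp add: inner_add_right uM l_def algebra_simps inner_commute)
    finally have "l * (v \<bullet> w) = 0" by simp
    then have "v \<bullet> w = 0" using lam by (simp add: l_def u_def)
    then have "M *v w = 0" using Mw xi by simp
    then show "w = 0" using pos by (metis inner_zero_right less_irrefl)
  qed
  have "l \<noteq> 0" using lam by (simp add: l_def u_def)
  have "N *v ((1 / l) *\<^sub>R u) = (1 / l) *\<^sub>R (N *v u)" by (simp add: matrix_vector_mult_scaleR)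
  also have "N *v u = l *\<^sub>R v" by (simp add: Nw Mu l_def scaleR_add_left inner_commute)
  finally have "N *v ((1 / l) *\<^sub>R u) = v" using \<open>l \<noteq> 0\<close> by simp
  then show "v v* matrix_inv N = (1 / (xi + eta * (v \<bullet> (matrix_inv M *v v)))) *\<^sub>R (matrix_inv M *v v)"
    using symmetric_matrix_inv_left[OF invN trN] unfolding l_def u_def by blast
qed

lemma matrix_vector_mult_2: "(M *v (v::real^2)) $ i = M$i$1 * v$1 + M$i$2 * v$2"
  by (simp add: matrix_vector_mult_def sum_2)

lemma matrix_inv_vector_2:
  fixes M :: "real^2^2"
  assumes "invertible M"
  shows "(matrix_inv M *v v) $ 1 = (M$2$2 * v$1 - M$1$2 * v$2) / det M"
    and "(matrix_inv M *v v) $ 2 = (M$1$1 * v$2 - M$2$1 * v$1) / det M"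
proof -
  define u where "u = matrix_inv M *v v"
  have "M *v u = v" unfolding u_def by (rule matrix_inv_vector_mult_cancel[OF assms])
  then have e1: "M$1$1 * u$1 + M$1$2 * u$2 = v$1" and e2: "M$2$1 * u$1 + M$2$2 * u$2 = v$2"
    by (simp_all only: matrix_vector_mult_2[symmetric])
  have "det M \<noteq> 0" using assms invertible_det_nz by blast
  moreover have "u$1 * det M = M$2$2 * v$1 - M$1$2 * v$2" "u$2 * det M = M$1$1 * v$2 - M$2$1 * v$1"
    unfolding det_2 e1[symmetric] e2[symmetric] by (simp_all add: algebra_simps)
  ultimately show "(matrix_inv M *v v) $ 1 = (M$2$2 * v$1 - M$1$2 * v$2) / det M"
    "(matrix_inv M *v v) $ 2 = (M$1$1 * v$2 - M$2$1 * v$1) / det M"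
    unfolding u_def[symmetric] by (simp_all add: field_simps)
qed

lemma differentiable_matrix_inv_vector_2:
  fixes m :: "real \<Rightarrow> real^2^2" and w :: "real \<Rightarrow> real^2"
  assumes "open S" "0 \<in> S" "\<And>t. t \<in> S \<Longrightarrow> invertible (m t)"
    and dm: "\<And>i j. (\<lambda>t. m t $ i $ j) differentiable (at 0)"
    and dw: "\<And>i. (\<lambda>t. w t $ i) differentiable (at 0)"
  shows "(\<lambda>t. (matrix_inv (m t) *v w t) $ i) differentiable (at 0)"
proof -
  have det0: "det (m 0) \<noteq> 0" using assms(2,3) invertible_det_nz by blast
  have "(\<lambda>t. det (m t)) differentiable (at 0)"
    unfolding det_2 by (intro differentiable_diff differentiable_mult dm)
  then have cramer: "(\<lambda>t. (m t $ j $ j * w t $ k - m t $ k $ j * w t $ j) / det (m t)) differentiable (at 0)" for j k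
    using det0 by (intro differentiable_divide differentiable_diff differentiable_mult dm dw)
  have diff_on_S: "(\<lambda>t. (matrix_inv (m t) *v w t) $ i) differentiable (at 0)"
    if fd: "f differentiable (at 0)" and feq: "\<And>t. t \<in> S \<Longrightarrow> f t = (matrix_inv (m t) *v w t) $ i" for f
  proof -
    obtain D where "(f has_derivative D) (at 0)" using fd unfolding differentiable_def by blast
    then have "((\<lambda>t. (matrix_inv (m t) *v w t) $ i) has_derivative D) (at 0)"
      by (rule has_derivative_transform_within_open[OF _ assms(1,2)]) (rule feq)
    then show ?thesis by (rule differentiableI)
  qed
  consider "i = 1" | "i = 2" using exhaust_2 by blast
  then show ?thesis
  proof cases
    case 1
    show ?thesis
      by (rule diff_on_S[OF cramer[of 2 1]]) (simp add: 1 matrix_inv_vector_2(1)[OF assms(3)])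
  next
    case 2
    show ?thesis
      by (rule diff_on_S[OF cramer[of 1 2]]) (simp add: 2 matrix_inv_vector_2(2)[OF assms(3)])
  qed
qed

lemma has_real_derivative_pd:
  assumes "f differentiable (at x)"
  shows "((\<lambda>t. f (x + t *\<^sub>R axis k 1)) has_real_derivative pd f k x) (at 0)"
proof -
  have "((\<lambda>t::real. x + t *\<^sub>R axis k 1) has_derivative (\<lambda>t. t *\<^sub>R axis k 1)) (at 0)"
    by (auto intro!: derivative_eq_intros)
  then have "(\<lambda>t::real. x + t *\<^sub>R axis k 1) differentiable (at 0)"
    by (rule differentiableI)
  from differentiable_chain_at[OF this] assms
  have "(\<lambda>t. f (x + t *\<^sub>R axis k 1)) differentiable (at 0)" by (simp add: o_def)
  then show ?thesis unfolding pd_def DERIV_deriv_iff_real_differentiable[symmetric] .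
qed

lemma pd_eqI:
  "((\<lambda>t. f (x + t *\<^sub>R axis k 1)) has_real_derivative D) (at 0) \<Longrightarrow> pd f k x = D"
  unfolding pd_def by (rule DERIV_imp_deriv)

lemma open_coordinate_line:
  fixes x :: "real^2"
  assumes "open U"
  shows "open {t::real. x + t *\<^sub>R axis k 1 \<in> U}"
  using continuous_open_vimage[OF assms, of "\<lambda>t. x + t *\<^sub>R axis k 1"]
  by (auto intro!: continuous_intros simp: vimage_def)

lemma pd_cong_open:
  assumes "open U" "x \<in> U" "\<And>y. y \<in> U \<Longrightarrow> f y = g y" "f differentiable (at x)"
  shows "pd f k x = pd g k x"
proof -
  have "((\<lambda>t. g (x + t *\<^sub>R axis k 1)) has_real_derivative pd f k x) (at 0)"
    by (rule has_field_derivative_transform_within_open[OF has_real_derivative_pd[OF assms(4)]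
          open_coordinate_line[OF assms(1)]]) (use assms in auto)
  then show ?thesis by (rule pd_eqI[symmetric])
qed

lemma has_real_derivative_matrix_inv_vector_2:
  fixes m :: "real \<Rightarrow> real^2^2" and w :: "real \<Rightarrow> real^2" and M' :: "real^2^2" and w' :: "real^2"
  assumes S: "open S" "0 \<in> S" and inv: "\<And>t. t \<in> S \<Longrightarrow> invertible (m t)"
    and dm: "\<And>i j. ((\<lambda>t. m t $ i $ j) has_real_derivative M' $ i $ j) (at 0)"
    and dw: "\<And>i. ((\<lambda>t. w t $ i) has_real_derivative w' $ i) (at 0)"
  obtains u' where "\<And>i. ((\<lambda>t. (matrix_inv (m t) *v w t) $ i) has_real_derivative u' $ i) (at 0)"
    and "m 0 *v u' = w' - M' *v (matrix_inv (m 0) *v w 0)"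
proof -
  define u where "u = (\<lambda>t. matrix_inv (m t) *v w t)"
  have "(\<lambda>t. u t $ i) differentiable (at 0)" for i
    unfolding u_def
  proof (rule differentiable_matrix_inv_vector_2[OF S inv])
    show "(\<lambda>t. m t $ i $ j) differentiable (at 0)" for i j
      using dm real_differentiable_def by blast
    show "(\<lambda>t. w t $ i) differentiable (at 0)" for i
      using dw real_differentiable_def by blast
  qed
  then have du: "((\<lambda>t. u t $ i) has_real_derivative (\<chi> i. deriv (\<lambda>t. u t $ i) 0) $ i) (at 0)" for i
    using DERIV_deriv_iff_real_differentiable by simp
  have "((\<lambda>t. m t $ i $ 1 * u t $ 1 + m t $ i $ 2 * u t $ 2) has_real_derivative
      (M' *v u 0 + m 0 *v (\<chi> i. deriv (\<lambda>t. u t $ i) 0)) $ i) (at 0)" for i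
    using DERIV_add[OF DERIV_mult[OF dm du] DERIV_mult[OF dm du]]
    by (simp add: matrix_vector_mult_2 algebra_simps)
  moreover have "m t $ i $ 1 * u t $ 1 + m t $ i $ 2 * u t $ 2 = w t $ i" if "t \<in> S" for i t
    using matrix_inv_vector_mult_cancel[OF inv[OF that]] matrix_vector_mult_2[of "m t" "u t" i]
    unfolding u_def by simp
  ultimately have "((\<lambda>t. w t $ i) has_real_derivative
      (M' *v u 0 + m 0 *v (\<chi> i. deriv (\<lambda>t. u t $ i) 0)) $ i) (at 0)" for i
    by (rule has_field_derivative_transform_within_open[OF _ S]) blast
  then have "M' *v u 0 + m 0 *v (\<chi> i. deriv (\<lambda>t. u t $ i) 0) = w'"
    using DERIV_unique[OF _ dw] by (simp add: vec_eq_iff)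
  then show ?thesis
    using that[of "\<chi> i. deriv (\<lambda>t. u t $ i) 0"] du unfolding u_def by (simp add: algebra_simps)
qed

text \<open>Differentiating \<open>A u = b\<close> gives \<open>(b\<^sup>2)' = 2 b' \<bullet> u - u \<bullet> A' u\<close>.\<close>
lemma has_real_derivative_bsq_line:
  fixes A :: "real^2 \<Rightarrow> real^2^2" and b :: "real^2 \<Rightarrow> real^2" and k :: 2
  assumes U: "open U" "x \<in> U"
    and pos: "\<And>y. y \<in> U \<Longrightarrow> transpose (A y) = A y \<and> (\<forall>v. v \<noteq> 0 \<longrightarrow> 0 < v \<bullet> (A y *v v))"
    and dA: "\<And>i j. (\<lambda>y. A y $ i $ j) differentiable (at x)"
    and db: "\<And>i. (\<lambda>y. b y $ i) differentiable (at x)"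
  defines "u \<equiv> matrix_inv (A x) *v b x"
    and "A' \<equiv> \<chi> i j. pd (\<lambda>y. A y $ i $ j) k x" and "b' \<equiv> \<chi> i. pd (\<lambda>y. b y $ i) k x"
  shows "((\<lambda>t. bsq A b (x + t *\<^sub>R axis k 1)) has_real_derivative 2 * (b' \<bullet> u) - u \<bullet> (A' *v u)) (at 0)"
proof -
  define l where "l = (\<lambda>t::real. x + t *\<^sub>R axis k 1)"
  define S where "S = {t::real. x + t *\<^sub>R axis k 1 \<in> U}"
  have S: "open S" "0 \<in> S" unfolding S_def using open_coordinate_line[OF U(1)] U(2) by auto
  have inv: "invertible (A (l t))" if "t \<in> S" for t
    using pos[of "l t"] that unfolding S_def l_def by (intro posdef_invertible) auto
  have dm: "((\<lambda>t. A (l t) $ i $ j) has_real_derivative A' $ i $ j) (at 0)" for i j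
    unfolding l_def A'_def by (simp add: has_real_derivative_pd[OF dA])
  have dw: "((\<lambda>t. b (l t) $ i) has_real_derivative b' $ i) (at 0)" for i
    unfolding l_def b'_def by (simp add: has_real_derivative_pd[OF db])
  obtain u' where du: "\<And>i. ((\<lambda>t. (matrix_inv (A (l t)) *v b (l t)) $ i) has_real_derivative u' $ i) (at 0)"
    and Au': "A x *v u' = b' - A' *v u"
    using has_real_derivative_matrix_inv_vector_2[OF S inv dm dw] unfolding l_def u_def by auto
  have "((\<lambda>t. bsq A b (l t)) has_real_derivative b' \<bullet> u + u' \<bullet> b x) (at 0)"
    using DERIV_add[OF DERIV_mult[OF dw du] DERIV_mult[OF dw du], of 1 1 2 2]
    unfolding bsq_def l_def u_def by (simp add: inner_vec_def sum_2 algebra_simps)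
  moreover have "u' \<bullet> b x = (A x *v u') \<bullet> u"
  proof -
    have "A x *v u = b x" unfolding u_def by (rule matrix_inv_vector_mult_cancel[OF inv[OF S(2)], unfolded l_def, simplified])
    moreover have "transpose (A x) = A x" using pos[OF U(2)] by blast
    ultimately show ?thesis using dot_lmul_matrix[of u' "A x" u] transpose_matrix_vector[of "A x" u']
      by (simp add: inner_commute)
  qed
  moreover have "b' \<bullet> u + (b' - A' *v u) \<bullet> u = 2 * (b' \<bullet> u) - u \<bullet> (A' *v u)"
    by (simp add: inner_diff_left inner_diff_right inner_commute)
  ultimately show ?thesis unfolding l_def Au' by simp
qed

lemma has_real_derivative_pd_bsq:
  fixes A :: "real^2 \<Rightarrow> real^2^2" and b :: "real^2 \<Rightarrow> real^2"
  assumes "open U" "x \<in> U"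
    and "\<And>y. y \<in> U \<Longrightarrow> transpose (A y) = A y \<and> (\<forall>v. v \<noteq> 0 \<longrightarrow> 0 < v \<bullet> (A y *v v))"
    and "\<And>i j. (\<lambda>y. A y $ i $ j) differentiable (at x)" "\<And>i. (\<lambda>y. b y $ i) differentiable (at x)"
  shows "((\<lambda>t. bsq A b (x + t *\<^sub>R axis k 1)) has_real_derivative pd (bsq A b) k x) (at 0)"
proof -
  obtain D where d: "((\<lambda>t. bsq A b (x + t *\<^sub>R axis k 1)) has_real_derivative D) (at 0)"
    using has_real_derivative_bsq_line[OF assms] by blast
  then show ?thesis unfolding pd_eqI[OF d] .
qed

definition xi_coef_deriv :: "real \<Rightarrow> real \<Rightarrow> real" where
  "xi_coef_deriv eps B = -3 * eps * (1 - eps * B)^2 * (2 + eps * B) / (1 + 2 * eps * B) powr (5/2)"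

definition eta_coef_deriv :: "real \<Rightarrow> real \<Rightarrow> real" where
  "eta_coef_deriv eps B = 9 * (B^2 + eps * B - 2) / (1 + 2 * eps * B) powr (5/2)"

lemma powr_three_halves: "0 < (p::real) \<Longrightarrow> p powr (3/2) = p * sqrt p"
  using powr_add[of p 1 "1/2"] by (simp add: powr_half_sqrt)

lemma powr_five_halves: "0 < (p::real) \<Longrightarrow> p powr (5/2) = p^2 * sqrt p"
  using powr_add[of p 2 "1/2"] by (simp add: powr_half_sqrt)

lemma xi_coef_closed_form:
  "0 < 1 + 2*eps*B \<Longrightarrow> xi_coef eps B = (1 - eps*B)^3 / ((1 + 2*eps*B) * sqrt (1 + 2*eps*B))"
  by (simp add: xi_coef_def powr_three_halves)

lemma eta_coef_closed_form:
  assumes "eps = 1 \<or> eps = -1" "B \<noteq> 0" "0 < 1 + 2*eps*B"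
  shows "eta_coef eps B = 9 * (eps + B + eps * B^2) / ((1 + 2*eps*B) * sqrt (1 + 2*eps*B))"
proof -
  define X where "X = (1 + 2*eps*B) * sqrt (1 + 2*eps*B)"
  define N where "N = eps + B + eps * B^2"
  have X: "0 < X" "X^2 = (1 + 2*eps*B)^3"
    using assms(3) by (simp_all add: X_def power_mult_distrib power2_eq_square power3_eq_cube)
  have "X^2 - (1 - 2*eps*B + 4*B^2) = 8 * B * N"
    unfolding X(2) N_def using assms(1) by (auto simp: algebra_simps power2_eq_square power3_eq_cube)
  then have "X - (1 - 2*eps*B + 4*B^2) / X = 8 * B * N / X"
    using X(1) by (simp add: field_simps power2_eq_square)
  then have "eta_coef eps B = 9 / (8*B) * (8 * B * N / X)"
    unfolding eta_coef_def powr_three_halves[OF assms(3)] X_def[symmetric] by simp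
  also have "\<dots> = 9 * N / X" using assms(2) by simp
  finally show ?thesis unfolding N_def X_def .
qed

lemma has_real_derivative_divide_three_halves_power:
  fixes f :: "real \<Rightarrow> real"
  assumes f: "(f has_real_derivative f') (at B)" and P: "0 < 1 + 2*eps*B"
  shows "((\<lambda>z. f z / ((1 + 2*eps*z) * sqrt (1 + 2*eps*z))) has_real_derivative
           (f' * (1 + 2*eps*B) - 3*eps * f B) / (1 + 2*eps*B) powr (5/2)) (at B)"
proof -
  define s where "s = sqrt (1 + 2*eps*B)"
  define p where "p = 1 + 2*eps*B"
  have s: "0 < s" using P by (simp add: s_def)
  have g: "((\<lambda>z. (1 + 2*eps*z) * sqrt (1 + 2*eps*z)) has_real_derivative 3 * eps * s) (at B)"
    using P by (auto intro!: derivative_eq_intros simp: s_def field_simps)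
  have "((\<lambda>z. f z / ((1 + 2*eps*z) * sqrt (1 + 2*eps*z))) has_real_derivative
      (f' * (p * s) - f B * (3 * eps * s)) / ((p * s) * (p * s))) (at B)"
    using DERIV_divide[OF f g] s P unfolding s_def[symmetric] p_def by simp
  moreover have "(f' * (p * s) - f B * (3 * eps * s)) / ((p * s) * (p * s)) = (f' * p - 3*eps * f B) / (p^2 * s)"
  proof -
    have "f' * (p * s) - f B * (3 * eps * s) = s * (f' * p - 3*eps * f B)" "(p * s) * (p * s) = s * (p^2 * s)"
      by (simp_all add: algebra_simps power2_eq_square)
    then show ?thesis using s by simp
  qed
  ultimately show ?thesis using P unfolding p_def s_def by (simp add: powr_five_halves)
qed

lemma has_real_derivative_xi_coef:
  assumes "0 < 1 + 2*eps*B"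
  shows "(xi_coef eps has_real_derivative xi_coef_deriv eps B) (at B)"
proof (rule has_field_derivative_transform_within_open)
  have "((\<lambda>z. (1 - eps*z)^3) has_real_derivative -3*eps*(1 - eps*B)^2) (at B)"
    by (auto intro!: derivative_eq_intros)
  note d = has_real_derivative_divide_three_halves_power[OF this assms]
  have "-3*eps*(1 - eps*B)^2 * (1 + 2*eps*B) - 3*eps * (1 - eps*B)^3 = -3 * eps * (1 - eps * B)^2 * (2 + eps * B)"
    by (simp add: algebra_simps power2_eq_square power3_eq_cube)
  with d show "((\<lambda>z. (1 - eps*z)^3 / ((1 + 2*eps*z) * sqrt (1 + 2*eps*z))) has_real_derivative xi_coef_deriv eps B) (at B)"
    unfolding xi_coef_deriv_def by simp
  show "open {z. 0 < 1 + 2*eps*z}" by (intro open_Collect_less continuous_intros)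
qed (use assms xi_coef_closed_form in auto)

lemma has_real_derivative_eta_coef:
  assumes "eps = 1 \<or> eps = -1" "B \<noteq> 0" "0 < 1 + 2*eps*B"
  shows "(eta_coef eps has_real_derivative eta_coef_deriv eps B) (at B)"
proof (rule has_field_derivative_transform_within_open)
  have "((\<lambda>z. 9 * (eps + z + eps * z^2)) has_real_derivative 9 * (1 + 2*eps*B)) (at B)"
    by (auto intro!: derivative_eq_intros simp: algebra_simps)
  note d = has_real_derivative_divide_three_halves_power[OF this assms(3)]
  have "9 * (1 + 2*eps*B) * (1 + 2*eps*B) - 3*eps * (9 * (eps + B + eps * B^2)) = 9 * (B^2 + eps * B - 2)"
    using assms(1) by (auto simp: algebra_simps power2_eq_square)
  with d show "((\<lambda>z. 9 * (eps + z + eps * z^2) / ((1 + 2*eps*z) * sqrt (1 + 2*eps*z))) has_real_derivative eta_coef_deriv eps B) (at B)"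
    unfolding eta_coef_deriv_def by simp
  show "open {z. z \<noteq> 0 \<and> 0 < 1 + 2*eps*z}"
    by (intro open_Collect_conj open_Collect_neq open_Collect_less continuous_intros)
  show "B \<in> {z. z \<noteq> 0 \<and> 0 < 1 + 2*eps*z}" using assms(2,3) by simp
qed (simp add: eta_coef_closed_form[OF assms(1)])

text \<open>The first identity is \<open>\<lambda> = \<xi> + \<eta> b\<^sup>2\<close>; the other three say that the coefficients of
  \<open>b\<^sub>i s\<^sub>j + b\<^sub>j s\<^sub>i\<close>, \<open>a\<^sub>i\<^sub>j\<close> and \<open>b\<^sub>i b\<^sub>j\<close> in \<open>\<lambda>(r\<^sup>*\<^sub>i\<^sub>j - \<tau>\<mu> a\<^sup>*\<^sub>i\<^sub>j)\<close> vanish.\<close>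
lemma tilde_coef_identities:
  assumes e: "eps = 1 \<or> eps = -1" and B: "0 < B" and P: "0 < 1 + 2*eps*B" and Q: "0 < 1 - eps*B"
  defines "P \<equiv> 1 + 2*eps*B" and "xi \<equiv> xi_coef eps B" and "eta \<equiv> eta_coef eps B"
    and "xi' \<equiv> xi_coef_deriv eps B" and "eta' \<equiv> eta_coef_deriv eps B"
    and "c \<equiv> 3 / (eps - B)" and "mu \<equiv> 2 * (1 - eps*B)^2 / (1 + 2*eps*B) powr (5/2)"
  shows "xi + eta * B = P powr (3/2)"
    and "xi * c - (xi' + eta' * B) * (c * B + 1) - eta = 0"
    and "2 * (xi * P + (1 - eps*B) * B * xi') - mu * P powr (3/2) * xi = 0"
    and "-12 * eps * xi - 8 * (1 - eps*B) * (xi' + eta' * B) + 4 * (1 - eps*B) * B * eta'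
           - 2 * P powr (3/2) * mu * eta = 0"
proof -
  define s where "s = sqrt P"
  have s: "0 < s" "s * s = P" using P by (simp_all add: s_def P_def)
  have em: "eps - B \<noteq> 0" using e B Q by auto
  have forms: "xi = (1 - eps*B)^3 / (P * s)" "eta = 9 * (eps + B + eps * B^2) / (P * s)"
    "xi' = -3 * eps * (1 - eps*B)^2 * (2 + eps*B) / (P^2 * s)" "eta' = 9 * (B^2 + eps*B - 2) / (P^2 * s)"
    "mu = 2 * (1 - eps*B)^2 / (P^2 * s)" "P powr (3/2) = P * s"
    using P B by (simp_all add: xi_def eta_def xi'_def eta'_def mu_def xi_coef_closed_form eta_coef_closed_form[OF e]
        xi_coef_deriv_def eta_coef_deriv_def powr_five_halves powr_three_halves P_def s_def)
  have "xi + eta * B = ((1 - eps*B)^3 + 9 * (eps + B + eps * B^2) * B) / (P * s)"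
    unfolding forms by (simp only: times_divide_eq_left add_divide_distrib)
  also have "(1 - eps*B)^3 + 9 * (eps + B + eps * B^2) * B = P * (s * s) * (s * s)"
    unfolding s(2) P_def using e by (auto simp: algebra_simps power2_eq_square power3_eq_cube)
  also have "P * (s * s) * (s * s) / (P * s) = (s * s) * s" using s(1) P unfolding P_def by simp
  also have "\<dots> = P * s" unfolding s(2) ..
  finally show "xi + eta * B = P powr (3/2)" unfolding forms .
  have P0: "P \<noteq> 0" using P unfolding P_def by simp
  define D where "D = P^2 * s"
  have D0: "D \<noteq> 0" using P0 s(1) by (simp add: D_def)
  have over_D: "xi = (1 - eps*B)^3 * P / D" "eta = 9 * (eps + B + eps * B^2) * P / D"
    "xi' = -3 * eps * (1 - eps*B)^2 * (2 + eps*B) / D" "eta' = 9 * (B^2 + eps*B - 2) / D"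
    "P powr (3/2) * mu = 2 * (1 - eps*B)^2 / P"
    unfolding forms D_def using P0 s(1) by (simp_all add: field_simps power2_eq_square)
  show "xi * c - (xi' + eta' * B) * (c * B + 1) - eta = 0"
  proof -
    define m where "m = eps - B"
    have "m \<noteq> 0" using em by (simp add: m_def)
    then show ?thesis
      unfolding over_D c_def m_def[symmetric] using D0 P0
      by (simp add: field_simps) (use e in \<open>auto simp: P_def m_def algebra_simps eval_nat_numeral\<close>)
  qed
  show "2 * (xi * P + (1 - eps*B) * B * xi') - mu * P powr (3/2) * xi = 0"
    unfolding mult.commute[of mu] over_D using D0 P0
    by (simp add: field_simps) (use e in \<open>auto simp: P_def algebra_simps eval_nat_numeral\<close>)
  show "-12 * eps * xi - 8 * (1 - eps*B) * (xi' + eta' * B) + 4 * (1 - eps*B) * B * eta'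
           - 2 * P powr (3/2) * mu * eta = 0"
    unfolding mult.assoc[of 2] over_D using D0 P0
    by (simp add: field_simps) (use e in \<open>auto simp: P_def algebra_simps eval_nat_numeral\<close>)
qed

lemma tilde_metric_component:
  "tilde_metric eps A b y $ i $ j =
     xi_coef eps (bsq A b y) * A y $ i $ j + eta_coef eps (bsq A b y) * (b y $ i * b y $ j)"
  unfolding tilde_metric_def by simp

lemma pd_tilde_metric:
  assumes dA: "(\<lambda>y. A y $ i $ j) differentiable (at x)"
    and db: "\<And>i. (\<lambda>y. b y $ i) differentiable (at x)"
    and dB: "((\<lambda>t. bsq A b (x + t *\<^sub>R axis k 1)) has_real_derivative Bk) (at 0)"
    and dxi: "(xi_coef eps has_real_derivative xi') (at (bsq A b x))"
    and deta: "(eta_coef eps has_real_derivative eta') (at (bsq A b x))"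
  shows "pd (\<lambda>y. tilde_metric eps A b y $ i $ j) k x =
     xi' * Bk * A x $ i $ j + xi_coef eps (bsq A b x) * pd (\<lambda>y. A y $ i $ j) k x
     + eta' * Bk * (b x $ i * b x $ j)
     + eta_coef eps (bsq A b x) * (pd (\<lambda>y. b y $ i) k x * b x $ j + b x $ i * pd (\<lambda>y. b y $ j) k x)"
proof (rule pd_eqI)
  have xi: "((\<lambda>t. xi_coef eps (bsq A b (x + t *\<^sub>R axis k 1))) has_real_derivative xi' * Bk) (at 0)"
    using DERIV_chain2[OF _ dB] dxi by simp
  have eta: "((\<lambda>t. eta_coef eps (bsq A b (x + t *\<^sub>R axis k 1))) has_real_derivative eta' * Bk) (at 0)"
    using DERIV_chain2[OF _ dB] deta by simp
  show "((\<lambda>t. tilde_metric eps A b (x + t *\<^sub>R axis k 1) $ i $ j) has_real_derivative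
     xi' * Bk * A x $ i $ j + xi_coef eps (bsq A b x) * pd (\<lambda>y. A y $ i $ j) k x
     + eta' * Bk * (b x $ i * b x $ j)
     + eta_coef eps (bsq A b x) * (pd (\<lambda>y. b y $ i) k x * b x $ j + b x $ i * pd (\<lambda>y. b y $ j) k x)) (at 0)"
    unfolding tilde_metric_component
    by (rule DERIV_cong[OF DERIV_add[OF DERIV_mult[OF xi has_real_derivative_pd[OF dA]]
          DERIV_mult[OF eta DERIV_mult[OF has_real_derivative_pd[OF db] has_real_derivative_pd[OF db]]]]])
       (simp add: algebra_simps)
qed

text \<open>Index form at a point: \<open>u = b\<^sup>i\<close>, \<open>G i j\<close> is the first-kind Christoffel symbol of \<open>a\<close>
  contracted with \<open>u\<close>, \<open>Gt\<close> that of \<open>a\<^sup>*\<close> contracted with the \<open>a\<^sup>*\<close>-raised \<open>u/\<lambda>\<close>, and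
  \<open>da k i j\<close>, \<open>dt k i j\<close>, \<open>db k i\<close>, \<open>Bk k\<close> are the \<open>\<partial>\<^sub>k\<close>-derivatives of \<open>a\<^sub>i\<^sub>j\<close>, \<open>a\<^sup>*\<^sub>i\<^sub>j\<close>, \<open>b\<^sub>i\<close>, \<open>b\<^sup>2\<close>.\<close>
lemma rank_one_change_r_identity:
  fixes a :: "2\<Rightarrow>2\<Rightarrow>real" and u bb Bk sv :: "2\<Rightarrow>real" and da dt :: "2\<Rightarrow>2\<Rightarrow>2\<Rightarrow>real"
    and db R Rt G Gt :: "2\<Rightarrow>2\<Rightarrow>real" and xi eta xi' eta' lam B :: real
  assumes as: "\<And>i j. a i j = a j i" and das: "\<And>k i j. da k i j = da k j i"
    and bb: "\<And>i. bb i = a i 1 * u 1 + a i 2 * u 2"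
    and B: "B = u 1 * bb 1 + u 2 * bb 2"
    and lam: "lam = xi + eta * B" "lam \<noteq> 0"
    and dt: "\<And>k i j. dt k i j = xi' * Bk k * a i j + xi * da k i j + eta' * Bk k * (bb i * bb j)
               + eta * (db k i * bb j + bb i * db k j)"
    and G: "\<And>i j. G i j = (u 1 * (da i 1 j + da j 1 i - da 1 i j) + u 2 * (da i 2 j + da j 2 i - da 2 i j)) / 2"
    and Gt: "\<And>i j. Gt i j = ((u 1 / lam) * (dt i 1 j + dt j 1 i - dt 1 i j) + (u 2 / lam) * (dt i 2 j + dt j 2 i - dt 2 i j)) / 2"
    and R: "\<And>i j. R i j = ((db j i - G i j) + (db i j - G j i)) / 2"
    and Rt: "\<And>i j. Rt i j = ((db j i - Gt i j) + (db i j - Gt j i)) / 2"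
    and sv: "\<And>j. sv j = u 1 * (((db j 1 - G 1 j) - (db 1 j - G j 1)) / 2) + u 2 * (((db j 2 - G 2 j) - (db 2 j - G j 2)) / 2)"
  shows "2 * lam * Rt i j = 2 * xi * R i j - xi' * (Bk i * bb j + Bk j * bb i - (u 1 * Bk 1 + u 2 * Bk 2) * a i j)
           - eta' * (B * (Bk i * bb j + Bk j * bb i) - (u 1 * Bk 1 + u 2 * Bk 2) * (bb i * bb j))
           - 2 * eta * (sv i * bb j + sv j * bb i)"
proof -
  have Gs: "G i j = G j i" for i j unfolding G by (simp add: das algebra_simps)
  have dts: "dt k i j = dt k j i" for k i j unfolding dt by (simp add: das as algebra_simps)
  have ab: "a 1 j * u 1 + a 2 j * u 2 = bb j" for j unfolding bb by (simp add: as)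
  have sv': "2 * sv j = u 1 * (db j 1 - db 1 j) + u 2 * (db j 2 - db 2 j)" for j
    unfolding sv by (simp add: Gs field_simps)
  have sv'': "sv j = (u 1 * (db j 1 - db 1 j) + u 2 * (db j 2 - db 2 j)) / 2" for j
    using sv'[of j] by simp
  have key: "2 * lam * Gt i j = xi' * (Bk i * bb j + Bk j * bb i - (u 1 * Bk 1 + u 2 * Bk 2) * a i j)
     + 2 * xi * G i j + eta' * (B * (Bk i * bb j + Bk j * bb i) - (u 1 * Bk 1 + u 2 * Bk 2) * (bb i * bb j))
     + eta * ((u 1 * db i 1 + u 2 * db i 2) * bb j + (u 1 * db j 1 + u 2 * db j 2) * bb i + B * (db i j + db j i)
        - (u 1 * db 1 i + u 2 * db 2 i) * bb j - bb i * (u 1 * db 1 j + u 2 * db 2 j))"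
  proof -
    have "2 * lam * Gt i j = u 1 * (dt i 1 j + dt j 1 i - dt 1 i j) + u 2 * (dt i 2 j + dt j 2 i - dt 2 i j)"
      unfolding Gt using lam(2) by (simp add: field_simps)
    also have "\<dots> = xi' * (Bk i * (a 1 j * u 1 + a 2 j * u 2) + Bk j * (a 1 i * u 1 + a 2 i * u 2) - (u 1 * Bk 1 + u 2 * Bk 2) * a i j)
     + xi * (u 1 * (da i 1 j + da j 1 i - da 1 i j) + u 2 * (da i 2 j + da j 2 i - da 2 i j))
     + eta' * ((u 1 * bb 1 + u 2 * bb 2) * (Bk i * bb j + Bk j * bb i) - (u 1 * Bk 1 + u 2 * Bk 2) * (bb i * bb j))
     + eta * ((u 1 * db i 1 + u 2 * db i 2) * bb j + (u 1 * db j 1 + u 2 * db j 2) * bb i + (u 1 * bb 1 + u 2 * bb 2) * (db i j + db j i)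
        - (u 1 * db 1 i + u 2 * db 2 i) * bb j - bb i * (u 1 * db 1 j + u 2 * db 2 j))"
      unfolding dt by (simp add: as das algebra_simps)
    also have "\<dots> = xi' * (Bk i * bb j + Bk j * bb i - (u 1 * Bk 1 + u 2 * Bk 2) * a i j)
     + 2 * xi * G i j + eta' * (B * (Bk i * bb j + Bk j * bb i) - (u 1 * Bk 1 + u 2 * Bk 2) * (bb i * bb j))
     + eta * ((u 1 * db i 1 + u 2 * db i 2) * bb j + (u 1 * db j 1 + u 2 * db j 2) * bb i + B * (db i j + db j i)
        - (u 1 * db 1 i + u 2 * db 2 i) * bb j - bb i * (u 1 * db 1 j + u 2 * db 2 j))"
      unfolding ab B G by simp
    finally show ?thesis .
  qed
  have Rt': "Rt i j = (db j i + db i j) / 2 - Gt i j" unfolding Rt using Gt by (simp add: dts field_simps)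
  have R': "R i j = (db j i + db i j) / 2 - G i j" unfolding R by (simp add: Gs field_simps)
  have "2 * lam * Rt i j = lam * (db j i + db i j) - 2 * lam * Gt i j" unfolding Rt' by (simp add: algebra_simps)
  also have "\<dots> = lam * (db j i + db i j) - (xi' * (Bk i * bb j + Bk j * bb i - (u 1 * Bk 1 + u 2 * Bk 2) * a i j)
     + 2 * xi * G i j + eta' * (B * (Bk i * bb j + Bk j * bb i) - (u 1 * Bk 1 + u 2 * Bk 2) * (bb i * bb j))
     + eta * ((u 1 * db i 1 + u 2 * db i 2) * bb j + (u 1 * db j 1 + u 2 * db j 2) * bb i + B * (db i j + db j i)
        - (u 1 * db 1 i + u 2 * db 2 i) * bb j - bb i * (u 1 * db 1 j + u 2 * db 2 j)))"
    by (simp only: key)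
  also have "\<dots> = 2 * xi * R i j - xi' * (Bk i * bb j + Bk j * bb i - (u 1 * Bk 1 + u 2 * Bk 2) * a i j)
           - eta' * (B * (Bk i * bb j + Bk j * bb i) - (u 1 * Bk 1 + u 2 * Bk 2) * (bb i * bb j))
           - eta * (2 * sv i * bb j + 2 * sv j * bb i)"
    unfolding R' lam(1) sv''[of i] sv''[of j] by (simp add: field_simps)
  finally show ?thesis by (simp add: algebra_simps)
qed

lemma r_tilde_proportional:
  fixes a :: "2\<Rightarrow>2\<Rightarrow>real" and u bb Bk sv :: "2\<Rightarrow>real"
    and R Rt :: "2\<Rightarrow>2\<Rightarrow>real" and xi eta xi' eta' lam B tau eps c p mu :: real
  assumes bb: "\<And>i. bb i = a i 1 * u 1 + a i 2 * u 2"
    and as: "\<And>i j. a i j = a j i"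
    and B: "B = u 1 * bb 1 + u 2 * bb 2"
    and lam: "lam \<noteq> 0"
    and E: "2 * lam * Rt i j = 2 * xi * R i j - xi' * (Bk i * bb j + Bk j * bb i - (u 1 * Bk 1 + u 2 * Bk 2) * a i j)
           - eta' * (B * (Bk i * bb j + Bk j * bb i) - (u 1 * Bk 1 + u 2 * Bk 2) * (bb i * bb j))
           - 2 * eta * (sv i * bb j + sv j * bb i)"
    and Bk: "\<And>k. Bk k = 2 * ((u 1 * R 1 k + u 2 * R 2 k) + sv k)"
    and us: "u 1 * sv 1 + u 2 * sv 2 = 0"
    and H: "\<And>i j. R i j = 2 * tau * (p * a i j - 3 * eps * bb i * bb j) + c * (bb i * sv j + bb j * sv i)"
    and p: "p = 1 + 2 * eps * B"
    and f1: "xi * c - (xi' + eta' * B) * (c * B + 1) - eta = 0"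
    and f2: "2 * (xi * p + (1 - eps * B) * B * xi') - mu * lam * xi = 0"
    and f3: "-12 * eps * xi - 8 * (1 - eps * B) * (xi' + eta' * B) + 4 * (1 - eps * B) * B * eta' - 2 * lam * mu * eta = 0"
  shows "Rt i j = tau * mu * (xi * a i j + eta * (bb i * bb j))"
proof -
  have ab: "u 1 * a 1 k + u 2 * a 2 k = bb k" for k unfolding bb by (simp add: as algebra_simps)
  have rk: "u 1 * R 1 k + u 2 * R 2 k = 2 * tau * (1 - eps * B) * bb k + c * B * sv k" for k
  proof -
    have "u 1 * R 1 k + u 2 * R 2 k = 2 * tau * (p * (u 1 * a 1 k + u 2 * a 2 k) - 3 * eps * (u 1 * bb 1 + u 2 * bb 2) * bb k)
       + c * ((u 1 * bb 1 + u 2 * bb 2) * sv k + bb k * (u 1 * sv 1 + u 2 * sv 2))"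
      unfolding H by (simp add: algebra_simps)
    also have "\<dots> = 2 * tau * (1 - eps * B) * bb k + c * B * sv k"
      unfolding ab B[symmetric] us p by (simp add: algebra_simps)
    finally show ?thesis .
  qed
  have Bk': "Bk k = 4 * tau * (1 - eps * B) * bb k + 2 * (c * B + 1) * sv k" for k
    unfolding Bk rk by (simp add: algebra_simps)
  have B': "u 1 * Bk 1 + u 2 * Bk 2 = 4 * tau * (1 - eps * B) * B"
  proof -
    have "u 1 * Bk 1 + u 2 * Bk 2 = 4 * tau * (1 - eps * B) * (u 1 * bb 1 + u 2 * bb 2) + 2 * (c * B + 1) * (u 1 * sv 1 + u 2 * sv 2)"
      unfolding Bk' by (simp add: algebra_simps)
    then show ?thesis unfolding us B[symmetric] by simp
  qed
  have "2 * lam * Rt i j - 2 * lam * (tau * mu * (xi * a i j + eta * (bb i * bb j)))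
     = (2 * tau * a i j) * (2 * (xi * p + (1 - eps * B) * B * xi') - mu * lam * xi)
       + (tau * bb i * bb j) * (-12 * eps * xi - 8 * (1 - eps * B) * (xi' + eta' * B) + 4 * (1 - eps * B) * B * eta' - 2 * lam * mu * eta)
       + 2 * (bb i * sv j + bb j * sv i) * (xi * c - (xi' + eta' * B) * (c * B + 1) - eta)"
    unfolding E B' unfolding Bk' H by (simp add: algebra_simps)
  then have "2 * lam * Rt i j - 2 * lam * (tau * mu * (xi * a i j + eta * (bb i * bb j))) = 0"
    unfolding f1 f2 f3 by simp
  then show ?thesis using lam by simp
qed

lemma symmetric_matrix_entry:
  assumes "transpose M = M"
  shows "M $ i $ j = M $ j $ i"
proof -
  have "transpose M $ j $ i = M $ j $ i" using assms by simp
  then show ?thesis by (simp add: transpose_def)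
qed

lemma b_eq_matrix_b_up:
  "invertible (A x) \<Longrightarrow> b x $ i = A x $ i $ 1 * b_up A b x $ 1 + A x $ i $ 2 * b_up A b x $ 2"
  using matrix_inv_vector_mult_cancel[of "A x" "b x"] matrix_vector_mult_2[of "A x" "b_up A b x" i]
  unfolding b_up_def by simp

lemma bsq_eq_b_up: "bsq A b x = b_up A b x $ 1 * b x $ 1 + b_up A b x $ 2 * b x $ 2"
  unfolding bsq_def b_up_def by (simp add: inner_vec_def sum_2 mult.commute)

lemma covd_eq_lowered_christoffel:
  "covd M b i j x = pd (\<lambda>y. b y $ i) j x -
     (\<Sum>l\<in>UNIV. (b x v* matrix_inv (M x)) $ l *
        (pd (\<lambda>y. M y $ l $ j) i x + pd (\<lambda>y. M y $ l $ i) j x - pd (\<lambda>y. M y $ i $ j) l x)) / 2"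
  unfolding covd_def christoffel_def vector_matrix_mult_def by (simp add: sum_2 field_simps)

lemma lowered_eq_b_up:
  assumes "transpose (M x) = M x" "invertible (M x)"
  shows "b x v* matrix_inv (M x) = b_up M b x"
  using symmetric_matrix_inv_left[OF assms(2,1) matrix_inv_vector_mult_cancel[OF assms(2)]]
  unfolding b_up_def .

lemma b_up_s_vec_eq_0: "(\<Sum>j\<in>UNIV. b_up A b x $ j * s_vec A b j x) = 0"
  unfolding s_vec_def s_tensor_def by (simp add: sum_2 field_simps)

lemma pd_metric_symmetric:
  assumes "open U" "x \<in> U" "\<And>y. y \<in> U \<Longrightarrow> transpose (A y) = A y"
    and "(\<lambda>y. A y $ i $ j) differentiable (at x)"
  shows "pd (\<lambda>y. A y $ i $ j) k x = pd (\<lambda>y. A y $ j $ i) k x"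
  by (rule pd_cong_open[OF assms(1,2) _ assms(4)]) (use assms(3) in \<open>auto simp: vec_eq_iff transpose_def\<close>)

lemma pd_bsq_eq:
  fixes A :: "real^2 \<Rightarrow> real^2^2" and b :: "real^2 \<Rightarrow> real^2"
  assumes U: "open U" "x \<in> U"
    and pos: "\<And>y. y \<in> U \<Longrightarrow> transpose (A y) = A y \<and> (\<forall>v. v \<noteq> 0 \<longrightarrow> 0 < v \<bullet> (A y *v v))"
    and dA: "\<And>i j. (\<lambda>y. A y $ i $ j) differentiable (at x)"
    and db: "\<And>i. (\<lambda>y. b y $ i) differentiable (at x)"
  shows "pd (bsq A b) k x = 2 * ((\<Sum>l\<in>UNIV. b_up A b x $ l * r_tensor A b l k x) + s_vec A b k x)"
proof -
  have invA: "invertible (A x)" using pos[OF U(2)] posdef_invertible by blast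
  have das: "pd (\<lambda>y. A y $ i $ j) k' x = pd (\<lambda>y. A y $ j $ i) k' x" for i j k'
    using pd_metric_symmetric[OF U _ dA] pos by blast
  have "pd (bsq A b) k x = 2 * ((\<chi> i. pd (\<lambda>y. b y $ i) k x) \<bullet> b_up A b x)
     - b_up A b x \<bullet> ((\<chi> i j. pd (\<lambda>y. A y $ i $ j) k x) *v b_up A b x)"
    using pd_eqI[OF has_real_derivative_bsq_line[OF U pos dA db]] unfolding b_up_def .
  then show ?thesis
    unfolding r_tensor_def s_vec_def s_tensor_def covd_eq_lowered_christoffel
      lowered_eq_b_up[where M=A and x=x, OF conjunct1[OF pos[OF U(2)]] invA]
    by (simp add: inner_vec_def matrix_vector_mult_def sum_2 das field_simps)
qed

lemma tilde_metric_lowered_beta: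
  fixes A :: "real^2 \<Rightarrow> real^2^2" and b :: "real^2 \<Rightarrow> real^2"
  assumes e: "eps = 1 \<or> eps = -1" and sym: "transpose (A x) = A x"
    and pos: "\<forall>v. v \<noteq> 0 \<longrightarrow> 0 < v \<bullet> (A x *v v)"
    and B: "0 < bsq A b x" "0 < 1 + 2 * eps * bsq A b x" "0 < 1 - eps * bsq A b x"
  shows "b x v* matrix_inv (tilde_metric eps A b x)
           = (1 / (1 + 2 * eps * bsq A b x) powr (3/2)) *\<^sub>R (matrix_inv (A x) *v b x)"
proof -
  have xi: "xi_coef eps (bsq A b x) \<noteq> 0"
    using B by (simp add: xi_coef_closed_form)
  have lam: "xi_coef eps (bsq A b x) + eta_coef eps (bsq A b x) * bsq A b x = (1 + 2 * eps * bsq A b x) powr (3/2)"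
    by (rule tilde_coef_identities(1)[OF e B])
  show ?thesis
    using rank_one_update_inverse(3)[OF sym pos xi, of "eta_coef eps (bsq A b x)" "b x"] lam B(2)
    unfolding tilde_metric_def bsq_def[symmetric] by auto
qed

lemma r_tensor_tilde_metric_identity:
  fixes A :: "real^2 \<Rightarrow> real^2^2" and b :: "real^2 \<Rightarrow> real^2"
  assumes U: "open U" "x \<in> U" and e: "eps = 1 \<or> eps = -1"
    and pos: "\<And>y. y \<in> U \<Longrightarrow> transpose (A y) = A y \<and> (\<forall>v. v \<noteq> 0 \<longrightarrow> 0 < v \<bullet> (A y *v v))"
    and dA: "\<And>i j. (\<lambda>y. A y $ i $ j) differentiable (at x)"
    and db: "\<And>i. (\<lambda>y. b y $ i) differentiable (at x)"
    and B: "0 < bsq A b x" "0 < 1 + 2 * eps * bsq A b x" "0 < 1 - eps * bsq A b x"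
  defines "Bd \<equiv> \<lambda>k. pd (bsq A b) k x"
    and "bBd \<equiv> \<Sum>l\<in>UNIV. b_up A b x $ l * pd (bsq A b) l x"
  shows "2 * (1 + 2 * eps * bsq A b x) powr (3/2) * r_tensor (tilde_metric eps A b) b i j x =
     2 * xi_coef eps (bsq A b x) * r_tensor A b i j x
     - xi_coef_deriv eps (bsq A b x) * (Bd i * b x $ j + Bd j * b x $ i - bBd * A x $ i $ j)
     - eta_coef_deriv eps (bsq A b x) * (bsq A b x * (Bd i * b x $ j + Bd j * b x $ i) - bBd * (b x $ i * b x $ j))
     - 2 * eta_coef eps (bsq A b x) * (s_vec A b i x * b x $ j + s_vec A b j x * b x $ i)"
proof -
  define lam where "lam = (1 + 2 * eps * bsq A b x) powr (3/2)"
  have lam0: "lam \<noteq> 0" using B(2) by (simp add: lam_def)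
  define u where "u = b_up A b x"
  have invA: "invertible (A x)" using pos[OF U(2)] posdef_invertible by blast
  have Asym: "A x $ i $ j = A x $ j $ i" for i j
    using pos[OF U(2)] symmetric_matrix_entry[of "A x" i j] by blast
  have lowA: "b x v* matrix_inv (A x) = u"
    unfolding u_def using lowered_eq_b_up[where M=A and x=x, OF _ invA] pos[OF U(2)] by blast
  have lowAt: "b x v* matrix_inv (tilde_metric eps A b x) = (1 / lam) *\<^sub>R u"
    using tilde_metric_lowered_beta[OF e _ _ B] pos[OF U(2)] unfolding lam_def u_def b_up_def by blast
  define da where "da = (\<lambda>k i j. pd (\<lambda>y. A y $ i $ j) k x)"
  define dbb where "dbb = (\<lambda>k i. pd (\<lambda>y. b y $ i) k x)"
  define dt where "dt = (\<lambda>k i j. pd (\<lambda>y. tilde_metric eps A b y $ i $ j) k x)"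
  have das: "da k i j = da k j i" for k i j
    unfolding da_def using pd_metric_symmetric[OF U _ dA] pos by blast
  note dB = has_real_derivative_pd_bsq[OF U pos dA db]
  have dtf: "dt k i j = xi_coef_deriv eps (bsq A b x) * Bd k * A x $ i $ j + xi_coef eps (bsq A b x) * da k i j
      + eta_coef_deriv eps (bsq A b x) * Bd k * (b x $ i * b x $ j)
      + eta_coef eps (bsq A b x) * (dbb k i * b x $ j + b x $ i * dbb k j)" for k i j
  proof -
    have "bsq A b x \<noteq> 0" using B(1) by simp
    from pd_tilde_metric[OF dA db dB has_real_derivative_xi_coef[OF B(2)] has_real_derivative_eta_coef[OF e this B(2)]]
    show ?thesis unfolding dt_def da_def dbb_def Bd_def by simp
  qed
  define G where "G = (\<lambda>i j. (u$1 * (da i 1 j + da j 1 i - da 1 i j) + u$2 * (da i 2 j + da j 2 i - da 2 i j)) / 2)"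
  define Gt where "Gt = (\<lambda>i j. ((u$1 / lam) * (dt i 1 j + dt j 1 i - dt 1 i j) + (u$2 / lam) * (dt i 2 j + dt j 2 i - dt 2 i j)) / 2)"
  have covA: "covd A b i j x = dbb j i - G i j" for i j
    unfolding covd_eq_lowered_christoffel lowA G_def da_def dbb_def by (simp add: sum_2)
  have covAt: "covd (tilde_metric eps A b) b i j x = dbb j i - Gt i j" for i j
    unfolding covd_eq_lowered_christoffel lowAt Gt_def dt_def dbb_def by (simp add: sum_2)
  have "2 * lam * r_tensor (tilde_metric eps A b) b i j x = 2 * xi_coef eps (bsq A b x) * r_tensor A b i j x
     - xi_coef_deriv eps (bsq A b x) * (Bd i * b x $ j + Bd j * b x $ i - (u$1 * Bd 1 + u$2 * Bd 2) * A x $ i $ j)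
     - eta_coef_deriv eps (bsq A b x) * (bsq A b x * (Bd i * b x $ j + Bd j * b x $ i) - (u$1 * Bd 1 + u$2 * Bd 2) * (b x $ i * b x $ j))
     - 2 * eta_coef eps (bsq A b x) * (s_vec A b i x * b x $ j + s_vec A b j x * b x $ i)"
    by (rule rank_one_change_r_identity[where a="\<lambda>i j. A x $ i $ j" and u="\<lambda>i. u $ i" and bb="\<lambda>i. b x $ i"
          and da=da and dt=dt and db=dbb and G=G and Gt=Gt and lam=lam])
       (use Asym das b_eq_matrix_b_up[where A=A and b=b and x=x, OF invA] bsq_eq_b_up[of A b x] tilde_coef_identities(1)[OF e B] lam0 dtf in
         \<open>simp_all add: lam_def G_def Gt_def r_tensor_def s_vec_def s_tensor_def covA covAt
            u_def[symmetric] sum_2\<close>)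
  then show ?thesis unfolding lam_def bBd_def u_def Bd_def by (simp add: sum_2)
qed

lemma r_tensor_tilde_metric_at:
  fixes A :: "real^2 \<Rightarrow> real^2^2" and b :: "real^2 \<Rightarrow> real^2"
  assumes U: "open U" "x \<in> U" and e: "eps = 1 \<or> eps = -1"
    and pos: "\<And>y. y \<in> U \<Longrightarrow> transpose (A y) = A y \<and> (\<forall>v. v \<noteq> 0 \<longrightarrow> 0 < v \<bullet> (A y *v v))"
    and dA: "\<And>i j. (\<lambda>y. A y $ i $ j) differentiable (at x)"
    and db: "\<And>i. (\<lambda>y. b y $ i) differentiable (at x)"
    and B: "0 < bsq A b x" "0 < 1 + 2 * eps * bsq A b x" "0 < 1 - eps * bsq A b x"
    and r: "\<And>i j. r_tensor A b i j x =
           2 * \<tau> * ((1 + 2 * eps * bsq A b x) * A x $ i $ j - 3 * eps * b x $ i * b x $ j)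
           + 3 / (eps - bsq A b x) * (b x $ i * s_vec A b j x + b x $ j * s_vec A b i x)"
  shows "r_tensor (tilde_metric eps A b) b i j x =
           2 * \<tau> * (1 - eps * bsq A b x) ^ 2 / (1 + 2 * eps * bsq A b x) powr (5/2)
           * tilde_metric eps A b x $ i $ j"
proof -
  have invA: "invertible (A x)" using pos[OF U(2)] posdef_invertible by blast
  have Asym: "A x $ i $ j = A x $ j $ i" for i j
    using pos[OF U(2)] symmetric_matrix_entry[of "A x" i j] by blast
  note coef = tilde_coef_identities[OF e B]
  have "r_tensor (tilde_metric eps A b) b i j x =
      \<tau> * (2 * (1 - eps * bsq A b x)^2 / (1 + 2 * eps * bsq A b x) powr (5/2))
        * (xi_coef eps (bsq A b x) * A x $ i $ j + eta_coef eps (bsq A b x) * (b x $ i * b x $ j))"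
    by (rule r_tilde_proportional[where a="\<lambda>i j. A x $ i $ j" and u="\<lambda>i. b_up A b x $ i" and bb="\<lambda>i. b x $ i"
          and sv="\<lambda>j. s_vec A b j x" and R="\<lambda>i j. r_tensor A b i j x" and Bk="\<lambda>k. pd (bsq A b) k x"
          and lam="(1 + 2 * eps * bsq A b x) powr (3/2)" and p="1 + 2 * eps * bsq A b x"
          and c="3 / (eps - bsq A b x)"])
       (use Asym b_eq_matrix_b_up[where A=A and b=b and x=x, OF invA] bsq_eq_b_up[of A b x] B(2) r coef(2-4)
          r_tensor_tilde_metric_identity[OF U e pos dA db B] pd_bsq_eq[OF U pos dA db] b_up_s_vec_eq_0[of A b x]
        in \<open>simp_all add: sum_2\<close>)
  then show ?thesis unfolding tilde_metric_component by simp
qed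

lemma bsq_tilde_metric:
  fixes A :: "real^2 \<Rightarrow> real^2^2" and b :: "real^2 \<Rightarrow> real^2"
  assumes e: "eps = 1 \<or> eps = -1" and sym: "transpose (A x) = A x"
    and pos: "\<forall>v. v \<noteq> 0 \<longrightarrow> 0 < v \<bullet> (A x *v v)"
    and B: "0 < bsq A b x" "0 < 1 + 2 * eps * bsq A b x" "0 < 1 - eps * bsq A b x"
  shows "bsq (tilde_metric eps A b) b x = bsq A b x / (1 + 2 * eps * bsq A b x) powr (3/2)"
proof -
  have "bsq (tilde_metric eps A b) b x = (b x v* matrix_inv (tilde_metric eps A b x)) \<bullet> b x"
    unfolding bsq_def dot_lmul_matrix by (simp add: inner_commute)
  then show ?thesis
    unfolding tilde_metric_lowered_beta[OF e sym pos B] by (simp add: bsq_def inner_commute)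
qed

theorem mainTheorem15:
  fixes U :: "(real^2) set" and A :: "real^2 \<Rightarrow> real^2^2" and b :: "real^2 \<Rightarrow> real^2"
    and \<tau> :: "real^2 \<Rightarrow> real" and eps :: real
  assumes "open U"
    and "eps = 1 \<or> eps = -1"
    and "riemannian_on U A"
    and "\<forall>x\<in>U. \<forall>i. (\<lambda>y. b y $ i) differentiable (at x)"
    and "\<forall>x\<in>U. b x \<noteq> 0"
    and "\<forall>x\<in>U. (if eps = 1 then bsq A b x < 1 else bsq A b x < 1/2)"
    and "\<forall>x\<in>U. \<forall>i j. r_tensor A b i j x =
           2 * \<tau> x * ((1 + 2 * eps * bsq A b x) * A x $ i $ j - 3 * eps * b x $ i * b x $ j)
           + 3 / (eps - bsq A b x) * (b x $ i * s_vec A b j x + b x $ j * s_vec A b i x)"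
  shows "\<forall>x\<in>U.
           (\<forall>i j. r_tensor (tilde_metric eps A b) b i j x =
              2 * \<tau> x * (1 - eps * bsq A b x) ^ 2 / (1 + 2 * eps * bsq A b x) powr (5/2)
              * tilde_metric eps A b x $ i $ j)
         \<and> bsq (tilde_metric eps A b) b x = bsq A b x / (1 + 2 * eps * bsq A b x) powr (3/2)"
proof (intro ballI conjI allI)
  fix x assume x: "x \<in> U"
  have pos: "\<And>y. y \<in> U \<Longrightarrow> transpose (A y) = A y \<and> (\<forall>v. v \<noteq> 0 \<longrightarrow> 0 < v \<bullet> (A y *v v))"
    and dA: "\<And>i j. (\<lambda>y. A y $ i $ j) differentiable (at x)"
    using assms(3) x unfolding riemannian_on_def by blast+
  have B0: "0 < bsq A b x"
    unfolding bsq_def using posdef_inverse_form_pos pos[OF x] assms(5) x by blast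
  moreover have "0 < 1 + 2 * eps * bsq A b x" "0 < 1 - eps * bsq A b x"
    using assms(2) assms(6) x B0 by auto
  ultimately have B: "0 < bsq A b x" "0 < 1 + 2 * eps * bsq A b x" "0 < 1 - eps * bsq A b x" by blast+
  show "r_tensor (tilde_metric eps A b) b i j x =
      2 * \<tau> x * (1 - eps * bsq A b x) ^ 2 / (1 + 2 * eps * bsq A b x) powr (5/2) * tilde_metric eps A b x $ i $ j"
    for i j
    using r_tensor_tilde_metric_at[OF assms(1) x assms(2) pos dA _ B] assms(4,7) x by blast
  show "bsq (tilde_metric eps A b) b x = bsq A b x / (1 + 2 * eps * bsq A b x) powr (3/2)"
    using bsq_tilde_metric[OF assms(2) _ _ B] pos[OF x] by blast
qed

end
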